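(* If $X$ is a strongly $\delta$-hyperbolic directed graph, then every strongly connected component of $X$ (viewed as a directed graph with the induced edges) is strongly $\delta$-hyperbolic.
   Context: Directed graphs may have loops and multiple edges; $d(u,v)$ is the length of a shortest directed path from $u$ to $v$ ($\infty$ if none). Strongly connected components are the equivalence classes of $x\sim y$ iff $d(x,y)<\infty$ and $d(y,x)<\infty$. Out-ball $\overrightarrow{\mathcal{B}}_r(x)=\{y : d(x,y)\le r\}$, in-ball $\overleftarrow{\mathcal{B}}_r(x)=\{y : d(y,x)\le r\}$, extended to sets by union. A path $[x_0,\dots,x_n]$ is a geodesic if $n=d(x_0,x_n)$. A directed geodesic triangle is an ordered triple $(p,q,r)$ of geodesics with the end of $p$ equal to the start of $q$ and $p\circ q$ having the same start and end as $r$; it is $\delta$-thin if every vertex of $r$ lies in $\overrightarrow{\mathcal{B}}_\delta(p)\cup\overleftarrow{\mathcal{B}}_\delta(q)$, every vertex of $p$ lies in $\overrightarrow{\mathcal{B}}_\delta(r)\cup\overleftarrow{\mathcal{B}}_\delta(q)$, and every vertex of $q$ lies in $\overrightarrow{\mathcal{B}}_\delta(p)\cup\overleftarrow{\mathcal{B}}_\delta(r)$. A directed graph is strongly $\delta$-hyperbolic if all its directed geodesic triangles are $\delta$-thin. *)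

theory Defs
  imports "Graph_Theory.Digraph" "Graph_Theory.Digraph_Component" "HOL-Library.Extended_Nat"
begin

text \<open>Directed graphs (loops and multiple arcs allowed) are Graph_Theory pre_digraphs
  satisfying wf_digraph.\<close>

definition dpath :: "('a,'b) pre_digraph \<Rightarrow> 'a list \<Rightarrow> bool" where
  "dpath G xs \<longleftrightarrow> xs \<noteq> [] \<and> set xs \<subseteq> verts G \<and>
     (\<forall>i. Suc i < length xs \<longrightarrow> (xs ! i, xs ! Suc i) \<in> arcs_ends G)"

definition ddist :: "('a,'b) pre_digraph \<Rightarrow> 'a \<Rightarrow> 'a \<Rightarrow> enat" where
  "ddist G u v = (INF xs \<in> {xs. dpath G xs \<and> hd xs = u \<and> last xs = v}. enat (length xs - 1))"

definition dgeodesic :: "('a,'b) pre_digraph \<Rightarrow> 'a list \<Rightarrow> bool" where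
  "dgeodesic G xs \<longleftrightarrow> dpath G xs \<and> enat (length xs - 1) = ddist G (hd xs) (last xs)"

definition out_ball :: "('a,'b) pre_digraph \<Rightarrow> real \<Rightarrow> 'a set \<Rightarrow> 'a set" where
  "out_ball G r S = {y \<in> verts G. \<exists>x\<in>S. \<exists>n::nat. ddist G x y = enat n \<and> real n \<le> r}"

definition in_ball :: "('a,'b) pre_digraph \<Rightarrow> real \<Rightarrow> 'a set \<Rightarrow> 'a set" where
  "in_ball G r S = {y \<in> verts G. \<exists>x\<in>S. \<exists>n::nat. ddist G y x = enat n \<and> real n \<le> r}"

definition geodesic_triangle :: "('a,'b) pre_digraph \<Rightarrow> 'a list \<Rightarrow> 'a list \<Rightarrow> 'a list \<Rightarrow> bool" where
  "geodesic_triangle G p q r \<longleftrightarrow> dgeodesic G p \<and> dgeodesic G q \<and> dgeodesic G r \<and>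
     last p = hd q \<and> hd r = hd p \<and> last r = last q"

definition thin_triangle :: "('a,'b) pre_digraph \<Rightarrow> real \<Rightarrow> 'a list \<Rightarrow> 'a list \<Rightarrow> 'a list \<Rightarrow> bool" where
  "thin_triangle G \<delta> p q r \<longleftrightarrow>
     set r \<subseteq> out_ball G \<delta> (set p) \<union> in_ball G \<delta> (set q) \<and>
     set p \<subseteq> out_ball G \<delta> (set r) \<union> in_ball G \<delta> (set q) \<and>
     set q \<subseteq> out_ball G \<delta> (set p) \<union> in_ball G \<delta> (set r)"

definition strongly_hyperbolic :: "('a,'b) pre_digraph \<Rightarrow> real \<Rightarrow> bool" where
  "strongly_hyperbolic G \<delta> \<longleftrightarrow>
     (\<forall>p q r. geodesic_triangle G p q r \<longrightarrow> thin_triangle G \<delta> p q r)"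

definition scc_classes :: "('a,'b) pre_digraph \<Rightarrow> 'a set set" where
  "scc_classes G = (\<lambda>x. {y \<in> verts G. ddist G x y < \<infinity> \<and> ddist G y x < \<infinity>}) ` verts G"

end

theory Submission
  imports Defs
begin

text \<open>A strongly connected component C is path-convex: any path of X between vertices of C
  stays inside C, because each of its vertices is reachable from and reaches C. Hence the
  induced subgraph on C has the same paths between vertices of C as X, so the same distances,
  geodesics and (restricted) balls, and every geodesic triangle of C is one of X, thin there
  and therefore thin in C.\<close>

lemma dpath_Cons2:
  "dpath G (x # y # ys) \<longleftrightarrow> x \<in> verts G \<and> (x, y) \<in> arcs_ends G \<and> dpath G (y # ys)"
  unfolding dpath_def by (auto simp: less_Suc_eq_0_disj)

lemma dpath_append:
  assumes "dpath G xs" "dpath G ys" "last xs = hd ys"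
  shows "dpath G (xs @ tl ys)"
  using assms
proof (induction xs)
  case Nil
  then show ?case by (simp add: dpath_def)
next
  case (Cons x xs)
  show ?case
  proof (cases xs)
    case Nil
    with Cons.prems show ?thesis by (cases ys) (auto simp: dpath_def)
  next
    case (Cons y zs)
    with Cons.prems have "dpath G (xs @ tl ys)"
      by (intro Cons.IH) (auto simp: dpath_Cons2)
    with Cons Cons.prems show ?thesis by (simp add: dpath_Cons2)
  qed
qed

lemma dpath_take:
  assumes "dpath G xs" "i < length xs"
  shows "dpath G (take (Suc i) xs)"
  using assms unfolding dpath_def by (auto dest: in_set_takeD)

lemma dpath_drop:
  assumes "dpath G xs" "i < length xs"
  shows "dpath G (drop i xs)"
  using assms unfolding dpath_def by (auto dest: in_set_dropD)

lemma ddist_less_infinity_iff: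
  "ddist G a b < \<infinity> \<longleftrightarrow> (\<exists>xs. dpath G xs \<and> hd xs = a \<and> last xs = b)"
proof
  assume "ddist G a b < \<infinity>"
  then show "\<exists>xs. dpath G xs \<and> hd xs = a \<and> last xs = b"
    unfolding ddist_def
    by (cases "{xs. dpath G xs \<and> hd xs = a \<and> last xs = b} = {}") (auto simp: top_enat_def)
next
  assume "\<exists>xs. dpath G xs \<and> hd xs = a \<and> last xs = b"
  then obtain xs where "dpath G xs \<and> hd xs = a \<and> last xs = b" by auto
  then have "ddist G a b \<le> enat (length xs - 1)"
    unfolding ddist_def by (intro INF_lower2[of xs]) auto
  then show "ddist G a b < \<infinity>" using le_less_trans by fastforce
qed

lemma ddist_less_infinity_trans:
  assumes "ddist G a b < \<infinity>" "ddist G b c < \<infinity>"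
  shows "ddist G a c < \<infinity>"
proof -
  from assms obtain xs ys where xs: "dpath G xs" "hd xs = a" "last xs = b"
    and ys: "dpath G ys" "hd ys = b" "last ys = c"
    unfolding ddist_less_infinity_iff by blast
  moreover have "dpath G (xs @ tl ys)" using xs ys by (intro dpath_append) simp_all
  ultimately have "dpath G (xs @ tl ys) \<and> hd (xs @ tl ys) = a \<and> last (xs @ tl ys) = c"
    by (cases xs; cases ys) (auto simp: dpath_def)
  then show ?thesis unfolding ddist_less_infinity_iff by blast
qed

lemma ddist_less_infinity_along_dpath:
  assumes "dpath G xs" "z \<in> set xs"
  shows "ddist G (hd xs) z < \<infinity>" "ddist G z (last xs) < \<infinity>"
proof -
  obtain i where i: "i < length xs" "xs ! i = z" using assms(2) by (auto simp: in_set_conv_nth)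
  have "last (take (Suc i) xs) = z" using i by (simp add: take_Suc_conv_app_nth)
  then have "dpath G (take (Suc i) xs) \<and> hd (take (Suc i) xs) = hd xs \<and> last (take (Suc i) xs) = z"
    using dpath_take[OF assms(1) i(1)] by simp
  then show "ddist G (hd xs) z < \<infinity>" unfolding ddist_less_infinity_iff by blast
  have "dpath G (drop i xs) \<and> hd (drop i xs) = z \<and> last (drop i xs) = last xs"
    using dpath_drop[OF assms(1) i(1)] i by (auto simp: hd_drop_conv_nth)
  then show "ddist G z (last xs) < \<infinity>" unfolding ddist_less_infinity_iff by blast
qed

definition path_convex :: "('a,'b) pre_digraph \<Rightarrow> 'a set \<Rightarrow> bool" where
  "path_convex G C \<longleftrightarrow> C \<subseteq> verts G \<and>
     (\<forall>xs. dpath G xs \<longrightarrow> hd xs \<in> C \<longrightarrow> last xs \<in> C \<longrightarrow> set xs \<subseteq> C)"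

lemma scc_class_path_convex:
  assumes "C \<in> scc_classes G"
  shows "path_convex G C"
proof -
  from assms obtain x where C: "C = {y \<in> verts G. ddist G x y < \<infinity> \<and> ddist G y x < \<infinity>}"
    unfolding scc_classes_def by auto
  have "z \<in> C" if "dpath G xs" "hd xs \<in> C" "last xs \<in> C" "z \<in> set xs" for xs z
  proof -
    have "z \<in> verts G" using that(1,4) by (auto simp: dpath_def)
    with that ddist_less_infinity_along_dpath[OF that(1,4)] show ?thesis
      unfolding C by (blast intro: ddist_less_infinity_trans)
  qed
  then show ?thesis unfolding path_convex_def C by blast
qed

lemma dpath_induce_subgraph:
  assumes "C \<subseteq> verts G"
  shows "dpath (induce_subgraph G C) xs \<longleftrightarrow> dpath G xs \<and> set xs \<subseteq> C"
proof -
  have "arcs_ends (induce_subgraph G C) = {(u, v) \<in> arcs_ends G. u \<in> C \<and> v \<in> C}"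
    by (auto simp: arcs_ends_def arc_to_ends_def)
  moreover have "\<And>i. Suc i < length xs \<Longrightarrow> xs ! i \<in> set xs \<and> xs ! Suc i \<in> set xs"
    by simp
  ultimately show ?thesis using assms unfolding dpath_def by (auto simp: subset_iff)
qed

context
  fixes G :: "('a,'b) pre_digraph" and C :: "'a set"
  assumes convex: "path_convex G C"
begin

lemma path_convex_subset_verts: "C \<subseteq> verts G"
  using convex unfolding path_convex_def by blast

lemma dpath_subset_iff_endpoints:
  assumes "dpath G xs"
  shows "set xs \<subseteq> C \<longleftrightarrow> hd xs \<in> C \<and> last xs \<in> C"
proof -
  have "hd xs \<in> set xs" "last xs \<in> set xs" using assms by (auto simp: dpath_def)
  with assms convex show ?thesis unfolding path_convex_def by (meson subset_iff)
qed

lemma dpath_induce_subgraph_iff_endpoints: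
  "dpath (induce_subgraph G C) xs \<longleftrightarrow> dpath G xs \<and> hd xs \<in> C \<and> last xs \<in> C"
  using dpath_induce_subgraph[OF path_convex_subset_verts] dpath_subset_iff_endpoints by blast

lemma ddist_induce_subgraph:
  assumes "a \<in> C" "b \<in> C"
  shows "ddist (induce_subgraph G C) a b = ddist G a b"
proof -
  have "{xs. dpath (induce_subgraph G C) xs \<and> hd xs = a \<and> last xs = b}
      = {xs. dpath G xs \<and> hd xs = a \<and> last xs = b}"
    using assms by (auto simp: dpath_induce_subgraph_iff_endpoints)
  then show ?thesis unfolding ddist_def by simp
qed

lemma dgeodesic_induce_subgraph:
  "dgeodesic (induce_subgraph G C) xs \<longleftrightarrow> dgeodesic G xs \<and> set xs \<subseteq> C"
proof (cases "dpath G xs \<and> hd xs \<in> C \<and> last xs \<in> C")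
  case True
  then show ?thesis
    by (simp add: dgeodesic_def dpath_induce_subgraph_iff_endpoints
        dpath_subset_iff_endpoints ddist_induce_subgraph)
next
  case False
  then show ?thesis
    by (auto simp: dgeodesic_def dpath_induce_subgraph_iff_endpoints dpath_subset_iff_endpoints)
qed

lemma out_ball_induce_subgraph:
  assumes "S \<subseteq> C"
  shows "out_ball (induce_subgraph G C) r S = out_ball G r S \<inter> C"
  using assms convex unfolding out_ball_def path_convex_def
  by (auto simp: ddist_induce_subgraph subset_iff) (metis ddist_induce_subgraph)+

lemma in_ball_induce_subgraph:
  assumes "S \<subseteq> C"
  shows "in_ball (induce_subgraph G C) r S = in_ball G r S \<inter> C"
  using assms convex unfolding in_ball_def path_convex_def
  by (auto simp: ddist_induce_subgraph subset_iff) (metis ddist_induce_subgraph)+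

lemma strongly_hyperbolic_induce_subgraph:
  assumes "strongly_hyperbolic G \<delta>"
  shows "strongly_hyperbolic (induce_subgraph G C) \<delta>"
  unfolding strongly_hyperbolic_def
proof (intro allI impI)
  fix p q r
  assume "geodesic_triangle (induce_subgraph G C) p q r"
  then have "geodesic_triangle G p q r" and sides: "set p \<subseteq> C" "set q \<subseteq> C" "set r \<subseteq> C"
    unfolding geodesic_triangle_def dgeodesic_induce_subgraph by auto
  with assms have "thin_triangle G \<delta> p q r" unfolding strongly_hyperbolic_def by blast
  with sides show "thin_triangle (induce_subgraph G C) \<delta> p q r"
    unfolding thin_triangle_def out_ball_induce_subgraph[OF sides(1)]
      out_ball_induce_subgraph[OF sides(3)] in_ball_induce_subgraph[OF sides(2)]
      in_ball_induce_subgraph[OF sides(3)]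
    by blast
qed

end

theorem proposition2p5:
  fixes G :: "('a,'b) pre_digraph" and \<delta> :: real
  assumes "wf_digraph G"
    and "strongly_hyperbolic G \<delta>"
    and "C \<in> scc_classes G"
  shows "strongly_hyperbolic (induce_subgraph G C) \<delta>"
  using strongly_hyperbolic_induce_subgraph[OF scc_class_path_convex[OF assms(3)] assms(2)] .

end
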